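(* Let $\rho$ be a valid state of an $(m,n)$-composite, and consider a sub-collection consisting of $m'\le m$ of its dits and $n'\le n$ of its anti-dits (an $(m',n')$-composite). Let $P$ be any operator belonging to a valid measurement on this $(m',n')$-composite. Then the operator $\sigma=\mathrm{Tr}_{\text{measured}}\big[(P\otimes I)\rho\big]$ on the remaining $m-m'$ dits and $n-n'$ anti-dits (where the partial trace is over the measured $m'$ dits and $n'$ anti-dits and $I$ is the identity on the remaining systems) is either zero or a positive multiple of a valid state of the remaining $(m-m',n-n')$-composite. In particular (taking $P=I$), every marginal of a valid state is a valid state.
   Context: Fix an integer $d\ge 2$. A dit $D$ and an anti-dit $A$ are each associated with $\mathbb C^d$ with computational orthonormal basis $\{|0\rangle,\dots,|d-1\rangle\}$; $\oplus$ denotes addition modulo $d$. An $(m,n)$-composite consists of $m$ dits $D_1,\dots,D_m$ and $n$ anti-dits $A_1,\dots,A_n$, with Hilbert space $(\mathbb C^d)^{\otimes m}\otimes(\mathbb C^d)^{\otimes n}$. For a dit $D_i$, an anti-dit $A_j$ and $k\in\{0,\dots,d-1\}$, let $\Pi_k^{D_iA_j}$ be the orthogonal projector onto $\mathrm{span}\{|s\rangle_{D_i}|s\oplus k\rangle_{A_j}: s=0,\dots,d-1\}$. Pure states: if $m\le n$, a pure state of the $(m,n)$-composite is a unit vector of the form $(U\otimes W)(|\Psi'\rangle\otimes|\mathbf r\rangle)$, where $U$ is a unitary permuting the tensor factors of the $m$ dits, $W$ a unitary permuting the tensor factors of the $n$ anti-dits, $|\mathbf r\rangle$ a computational-basis product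 vector of anti-dits $A_{m+1},\dots,A_n$, and $|\Psi'\rangle$ a unit vector of $D_1\cdots D_mA_1\cdots A_m$ with $(\Pi_{k_1}^{D_1A_1}\otimes\cdots\otimes\Pi_{k_m}^{D_mA_m})|\Psi'\rangle=|\Psi'\rangle$ for some $k_1,\dots,k_m$. If $m\ge n$, the same with roles of dits and anti-dits exchanged (a computational-basis product vector on the $m-n$ extra dits). The $(0,0)$-composite is the trivial system $\mathbb C$. Valid states are density matrices that are finite convex combinations of projectors onto pure states. A valid measurement on an $(m,n)$-composite is a POVM $\{P_i\}$ ($P_i\ge 0$, $\sum_iP_i=I$) in which each $P_i$ is a linear combination with nonnegative coefficients of projectors $|\Psi\rangle\langle\Psi|$ onto pure states of that composite; outcome probabilities are $\mathrm{Tr}[P_i\rho]$. *)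

theory Defs
  imports Complex_Main "HOL-Library.FuncSet"
begin

text \<open>A composite is described by a finite set DS of dit labels and a finite set AS of
anti-dit labels. A computational basis configuration is a pair (f,g) of extensional
functions giving the value in {0..d-1} of each dit / anti-dit. Vectors are complex
functions on configurations (zero outside the basis); operators are matrices indexed
by configurations (entry X a b = matrix element of |a> ... <b|).\<close>

type_synonym cfg = "(nat \<Rightarrow> nat) \<times> (nat \<Rightarrow> nat)"
type_synonym vec = "cfg \<Rightarrow> complex"
type_synonym op = "cfg \<Rightarrow> cfg \<Rightarrow> complex"

definition basis :: "nat \<Rightarrow> nat set \<Rightarrow> nat set \<Rightarrow> cfg set" where
  "basis d DS AS = (PiE DS (\<lambda>_. {..<d})) \<times> (PiE AS (\<lambda>_. {..<d}))"

definition in_space :: "nat \<Rightarrow> nat set \<Rightarrow> nat set \<Rightarrow> vec \<Rightarrow> bool" where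
  "in_space d DS AS \<psi> \<longleftrightarrow> (\<forall>c. c \<notin> basis d DS AS \<longrightarrow> \<psi> c = 0)"

definition unit_vec :: "nat \<Rightarrow> nat set \<Rightarrow> nat set \<Rightarrow> vec \<Rightarrow> bool" where
  "unit_vec d DS AS \<psi> \<longleftrightarrow> in_space d DS AS \<psi> \<and> (\<Sum>c\<in>basis d DS AS. (cmod (\<psi> c))\<^sup>2) = 1"

text \<open>Case m \<le> n: dit i is paired with anti-dit \<pi> i (the permutations U, W),
the vector lies in the range of the tensor product of the projectors
Pi_{k i}^{D_i A_{\<pi> i}}, and the unpaired anti-dits are in computational basis state r.\<close>
definition pure_DA :: "nat \<Rightarrow> nat set \<Rightarrow> nat set \<Rightarrow> vec \<Rightarrow> bool" where
  "pure_DA d DS AS \<psi> \<longleftrightarrow> (\<exists>\<pi> k r. inj_on \<pi> DS \<and> \<pi> ` DS \<subseteq> AS \<and> (\<forall>i\<in>DS. k i < d)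
     \<and> (\<forall>j\<in>AS - \<pi> ` DS. r j < d)
     \<and> (\<forall>f g. (f, g) \<in> basis d DS AS \<and> \<psi> (f, g) \<noteq> 0 \<longrightarrow>
            (\<forall>i\<in>DS. g (\<pi> i) = (f i + k i) mod d) \<and> (\<forall>j\<in>AS - \<pi> ` DS. g j = r j)))"

text \<open>Case m \<ge> n: anti-dit j is paired with dit \<pi> j; unpaired dits in basis state r.\<close>
definition pure_AD :: "nat \<Rightarrow> nat set \<Rightarrow> nat set \<Rightarrow> vec \<Rightarrow> bool" where
  "pure_AD d DS AS \<psi> \<longleftrightarrow> (\<exists>\<pi> k r. inj_on \<pi> AS \<and> \<pi> ` AS \<subseteq> DS \<and> (\<forall>j\<in>AS. k j < d)
     \<and> (\<forall>i\<in>DS - \<pi> ` AS. r i < d)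
     \<and> (\<forall>f g. (f, g) \<in> basis d DS AS \<and> \<psi> (f, g) \<noteq> 0 \<longrightarrow>
            (\<forall>j\<in>AS. g j = (f (\<pi> j) + k j) mod d) \<and> (\<forall>i\<in>DS - \<pi> ` AS. f i = r i)))"

definition pure_state :: "nat \<Rightarrow> nat set \<Rightarrow> nat set \<Rightarrow> vec \<Rightarrow> bool" where
  "pure_state d DS AS \<psi> \<longleftrightarrow> unit_vec d DS AS \<psi> \<and>
     ((card DS \<le> card AS \<and> pure_DA d DS AS \<psi>) \<or> (card AS \<le> card DS \<and> pure_AD d DS AS \<psi>))"

definition proj :: "vec \<Rightarrow> op" where
  "proj \<psi> = (\<lambda>a b. \<psi> a * cnj (\<psi> b))"

definition valid_state :: "nat \<Rightarrow> nat set \<Rightarrow> nat set \<Rightarrow> op \<Rightarrow> bool" where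
  "valid_state d DS AS \<rho> \<longleftrightarrow> (\<exists>(N::nat) p \<psi>. (\<forall>i<N. p i \<ge> (0::real) \<and> pure_state d DS AS (\<psi> i))
      \<and> (\<Sum>i<N. p i) = 1 \<and> \<rho> = (\<lambda>a b. \<Sum>i<N. complex_of_real (p i) * proj (\<psi> i) a b))"

definition nonneg_comb_pure :: "nat \<Rightarrow> nat set \<Rightarrow> nat set \<Rightarrow> op \<Rightarrow> bool" where
  "nonneg_comb_pure d DS AS P \<longleftrightarrow> (\<exists>(N::nat) c \<psi>. (\<forall>i<N. c i \<ge> (0::real) \<and> pure_state d DS AS (\<psi> i))
      \<and> P = (\<lambda>a b. \<Sum>i<N. complex_of_real (c i) * proj (\<psi> i) a b))"

definition psd :: "nat \<Rightarrow> nat set \<Rightarrow> nat set \<Rightarrow> op \<Rightarrow> bool" where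
  "psd d DS AS P \<longleftrightarrow> (\<forall>v. in_space d DS AS v \<longrightarrow>
     (let q = (\<Sum>a\<in>basis d DS AS. \<Sum>b\<in>basis d DS AS. cnj (v a) * P a b * v b)
      in Im q = 0 \<and> Re q \<ge> 0))"

definition id_op :: "nat \<Rightarrow> nat set \<Rightarrow> nat set \<Rightarrow> op" where
  "id_op d DS AS = (\<lambda>a b. if a \<in> basis d DS AS \<and> a = b then 1 else 0)"

definition valid_measurement :: "nat \<Rightarrow> nat set \<Rightarrow> nat set \<Rightarrow> op list \<Rightarrow> bool" where
  "valid_measurement d DS AS Ps \<longleftrightarrow>
     (\<forall>P\<in>set Ps. psd d DS AS P \<and> nonneg_comb_pure d DS AS P)
     \<and> (\<lambda>a b. \<Sum>i<length Ps. (Ps ! i) a b) = id_op d DS AS"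

definition join :: "nat set \<Rightarrow> nat set \<Rightarrow> cfg \<Rightarrow> cfg \<Rightarrow> cfg" where
  "join DS' AS' x y = ((\<lambda>i. if i \<in> DS' then fst x i else fst y i),
                      (\<lambda>j. if j \<in> AS' then snd x j else snd y j))"

text \<open>sigma = Tr_measured[(P \<otimes> I) rho]:
 sigma(r,r') = sum_{a,b} P(a,b) rho((b,r),(a,r')).\<close>
definition ptrace_op :: "nat \<Rightarrow> nat set \<Rightarrow> nat set \<Rightarrow> nat set \<Rightarrow> nat set \<Rightarrow> op \<Rightarrow> op \<Rightarrow> op" where
  "ptrace_op d DS AS DS' AS' P \<rho> = (\<lambda>r r'.
     if r \<in> basis d (DS - DS') (AS - AS') \<and> r' \<in> basis d (DS - DS') (AS - AS') then
       (\<Sum>a\<in>basis d DS' AS'. \<Sum>b\<in>basis d DS' AS'. P a b * \<rho> (join DS' AS' b r) (join DS' AS' a r'))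
     else 0)"

end

theory Submission
  imports Defs
begin

text \<open>View the dits and anti-dits as nodes of two colours. The support of a pure state is cut out
  by congruences modulo d attached to a partial matching between nodes of different colours: a
  matched pair has a fixed difference of values, an unmatched node a fixed value. Contracting a pure
  state of the whole system with a pure state of the measured subsystem gives a vector on the
  remaining systems whose support is again of this form: starting from a remaining node and
  alternately following the two matchings, one either reaches another remaining node (of the other
  colour, since the walk has odd length), which becomes its partner, or gets stuck at a node with a
  fixed value. Hence such a contracted vector is zero or a multiple of a pure state, and expanding
  P and \<rho> into pure projectors writes \<open>Tr[(P \<otimes> I)\<rho>]\<close> as a nonnegative combination of projectors
  onto pure states.\<close>

definition pairing :: "('a \<Rightarrow> bool) \<Rightarrow> 'a set \<Rightarrow> 'a set \<Rightarrow> ('a \<Rightarrow> 'a) \<Rightarrow> bool" where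
  "pairing tp V M N \<longleftrightarrow> M \<subseteq> V \<and> (\<forall>x\<in>M. N x \<in> M \<and> N (N x) = x \<and> tp (N x) \<noteq> tp x)"

definition pairing_constraints ::
    "nat \<Rightarrow> 'a set \<Rightarrow> 'a set \<Rightarrow> ('a \<Rightarrow> 'a) \<Rightarrow> ('a \<Rightarrow> int) \<Rightarrow> ('a \<Rightarrow> int) \<Rightarrow> ('a \<Rightarrow> int) \<Rightarrow> bool" where
  "pairing_constraints d V M N Of Fx w \<longleftrightarrow>
     (\<forall>x\<in>M. int d dvd (w (N x) - w x - Of x)) \<and> (\<forall>x\<in>V - M. int d dvd (w x - Fx x))"

lemma pairing_constraints_cong:
  assumes "pairing tp V M N" "\<forall>x\<in>V. w x = w' x"
  shows "pairing_constraints d V M N Of Fx w = pairing_constraints d V M N Of Fx w'"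
  using assms unfolding pairing_def pairing_constraints_def by (metis Diff_iff subsetD)

locale two_pairings =
  fixes V V' :: "'a set" and tp :: "'a \<Rightarrow> bool" and M1 M2 :: "'a set" and N1 N2 :: "'a \<Rightarrow> 'a"
  assumes finite_V: "finite V" and sub: "V' \<subseteq> V"
    and pairing1: "pairing tp V M1 N1" and pairing2: "pairing tp V' M2 N2"
begin

definition pair_step :: "nat \<Rightarrow> 'a \<Rightarrow> 'a" where "pair_step i = (if even i then N1 else N2)"
definition pair_dom :: "nat \<Rightarrow> 'a set" where "pair_dom i = (if even i then M1 else M2)"

fun walk :: "'a \<Rightarrow> nat \<Rightarrow> 'a" where
  "walk x 0 = x" | "walk x (Suc i) = pair_step i (walk x i)"

definition continues :: "'a \<Rightarrow> nat \<Rightarrow> bool" where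
  "continues x i \<longleftrightarrow> walk x i \<in> pair_dom i \<and> (i = 0 \<or> walk x i \<in> V')"

lemma pair_dom_subset: "pair_dom i \<subseteq> V"
  using pairing1 pairing2 sub unfolding pair_dom_def pairing_def by auto

lemma pair_step_parity: "even i = even j \<Longrightarrow> pair_step i = pair_step j"
  unfolding pair_step_def by auto

lemma pair_step_pairing: "y \<in> pair_dom i \<Longrightarrow> pair_step i y \<in> pair_dom i \<and> pair_step i (pair_step i y) = y \<and> tp (pair_step i y) \<noteq> tp y"
  using pairing1 pairing2 unfolding pair_dom_def pair_step_def pairing_def by (auto split: if_splits)

lemma continues_step:
  "continues x i \<Longrightarrow> walk x (Suc i) \<in> pair_dom i \<and> pair_step i (walk x (Suc i)) = walk x i
     \<and> tp (walk x (Suc i)) \<noteq> tp (walk x i)"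
  unfolding continues_def using pair_step_pairing by auto

lemma walk_in_V: "x \<in> V \<Longrightarrow> \<forall>i<n. continues x i \<Longrightarrow> walk x n \<in> V"
  using continues_step[of x "n - 1"] pair_dom_subset by (cases n) auto

lemma walk_back: "\<forall>i<n. continues x i \<Longrightarrow> 0 < i \<Longrightarrow> i \<le> n \<Longrightarrow> pair_step (i - 1) (walk x i) = walk x (i - 1)"
  using continues_step[of x "i - 1"] by (cases i) auto

lemma walk_even_in_V': "\<forall>i<n. continues x i \<Longrightarrow> 0 < j \<Longrightarrow> j \<le> n \<Longrightarrow> even j \<Longrightarrow> walk x j \<in> V'"
  using continues_step[of x "j - 1"] pairing2 unfolding pair_dom_def pairing_def by (cases j) auto

text \<open>A repeated node on a walk leaving \<open>V - V'\<close> produces an earlier repetition: stepping back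
  from both occurrences uses the same pairing when the indices have equal parity, and otherwise
  the repetition is reflected into the middle of the walk.\<close>
lemma walk_repetition_shrinks:
  assumes x: "x \<in> V - V'" and cont: "\<forall>i<n. continues x i"
    and ij: "i < j" "j \<le> n" and eq: "walk x i = walk x j"
  shows "\<exists>i' j'. i' < j' \<and> j' < j \<and> walk x i' = walk x j'"
proof -
  have back_j: "pair_step (j - 1) (walk x j) = walk x (j - 1)" using walk_back[OF cont, of j] ij by simp
  have "j \<noteq> Suc i" using continues_step[of x i] cont ij eq by auto
  consider "i = 0" "even j" | "i = 0" "odd j" | "0 < i" "even i = even j" | "0 < i" "even i \<noteq> even j"
    by auto
  then show ?thesis
  proof cases
    case 1
    then show ?thesis using walk_even_in_V'[OF cont, of j] ij eq x by simp
  next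
    case 2
    have "walk x 1 = pair_step (j - 1) (walk x j)" using eq 2 pair_step_parity[of 0 "j - 1"] by simp
    then show ?thesis using back_j 2 \<open>j \<noteq> Suc i\<close> ij
      by (intro exI[of _ 1] exI[of _ "j - 1"]) (auto elim: oddE)
  next
    case 3
    have "walk x (i - 1) = walk x (j - 1)"
      using walk_back[OF cont, of i] back_j eq 3 ij pair_step_parity[of "i - 1" "j - 1"] by simp
    then show ?thesis using 3 ij by (intro exI[of _ "i - 1"] exI[of _ "j - 1"]) auto
  next
    case 4
    have "odd (j - i)" using 4 ij by auto
    then obtain k where k: "j - i = 2 * k + 1" by (rule oddE)
    with \<open>j \<noteq> Suc i\<close> have "0 < k" by (cases k) auto
    with k ij have "j - 1 = i + 2 * k" "Suc i < j - 1" by linarith+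
    then have "even i = even (j - 1)" "Suc i < j - 1" by simp_all
    moreover have "walk x (Suc i) = pair_step i (walk x j)" using eq by simp
    ultimately show ?thesis using back_j pair_step_parity[of i "j - 1"]
      by (intro exI[of _ "Suc i"] exI[of _ "j - 1"]) auto
  qed
qed

lemma walk_distinct:
  assumes x: "x \<in> V - V'" and cont: "\<forall>i<n. continues x i"
  shows "j \<le> n \<Longrightarrow> i < j \<Longrightarrow> walk x i \<noteq> walk x j"
proof (induction j arbitrary: i rule: less_induct)
  case (less j)
  then show ?case using walk_repetition_shrinks[OF x cont, of i j] by fastforce
qed

lemma walk_terminates:
  assumes x: "x \<in> V - V'"
  shows "\<exists>n. \<not> continues x n"
proof (rule ccontr)
  assume "\<not> ?thesis"
  then have cont: "\<forall>i<card V + 1. continues x i" by auto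
  have "inj_on (walk x) {..card V}"
    using walk_distinct[OF x cont] unfolding inj_on_def by (metis atMost_iff le_SucI linorder_neqE_nat Suc_eq_plus1)
  moreover have "walk x ` {..card V} \<subseteq> V"
    using walk_in_V cont x by auto
  ultimately have "card {..card V} \<le> card V"
    using card_inj_on_le finite_V by blast
  then show False by simp
qed

definition walk_length :: "'a \<Rightarrow> nat" where "walk_length x = (LEAST n. \<not> continues x n)"

lemma walk_length_props:
  assumes "x \<in> V - V'"
  shows "\<forall>i<walk_length x. continues x i" "\<not> continues x (walk_length x)"
  using walk_terminates[OF assms] unfolding walk_length_def by (metis not_less_Least, metis LeastI)

lemma walk_length_eqI: "\<forall>i<n. continues x i \<Longrightarrow> \<not> continues x n \<Longrightarrow> walk_length x = n"
  unfolding walk_length_def by (rule Least_equality) (auto simp: not_less[symmetric])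

lemma walk_type: "\<forall>i<n. continues x i \<Longrightarrow> tp (walk x n) = (if even n then tp x else \<not> tp x)"
proof (induction n)
  case (Suc n)
  then show ?case using continues_step[of x n] by auto
qed simp

definition offset :: "('a \<Rightarrow> int) \<Rightarrow> ('a \<Rightarrow> int) \<Rightarrow> 'a \<Rightarrow> nat \<Rightarrow> int" where
  "offset O1 O2 x n = (\<Sum>i<n. (if even i then O1 else O2) (walk x i))"

lemma walk_congruence:
  assumes s1: "pairing_constraints d V M1 N1 O1 F1 w" and s2: "pairing_constraints d V' M2 N2 O2 F2 w"
  shows "\<forall>i<n. continues x i \<Longrightarrow> int d dvd (w (walk x n) - w x - offset O1 O2 x n)"
proof (induction n)
  case 0 then show ?case by (simp add: offset_def)
next
  case (Suc n)
  then have c: "continues x n" and ih: "int d dvd (w (walk x n) - w x - offset O1 O2 x n)" by auto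
  have "walk x n \<in> pair_dom n" using c continues_def by auto
  then have "int d dvd (w (pair_step n (walk x n)) - w (walk x n) - (if even n then O1 else O2) (walk x n))"
    using s1 s2 unfolding pairing_constraints_def pair_dom_def pair_step_def by (auto split: if_splits)
  from dvd_add[OF ih this] show ?case by (simp add: offset_def algebra_simps)
qed

text \<open>The nodes of \<open>V - V'\<close> whose walk ends outside \<open>V'\<close> after at least one step; the endpoint
  is their partner, and the reversed walk connects it back.\<close>
definition linked :: "'a set" where "linked = {x \<in> V - V'. 0 < walk_length x \<and> walk x (walk_length x) \<notin> V'}"
definition partner :: "'a \<Rightarrow> 'a" where "partner x = walk x (walk_length x)"

lemma linked_odd_length: "x \<in> linked \<Longrightarrow> odd (walk_length x)"
  using walk_even_in_V'[OF walk_length_props(1), of x "walk_length x"] unfolding linked_def by auto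

lemma walk_reverse:
  assumes xm: "x \<in> linked"
  shows "i \<le> walk_length x \<Longrightarrow> walk (partner x) i = walk x (walk_length x - i)"
proof (induction i)
  case 0 then show ?case by (simp add: partner_def)
next
  case (Suc i)
  define j where "j = walk_length x - Suc i"
  have cj: "continues x j" using walk_length_props(1) xm Suc.prems unfolding linked_def j_def by auto
  have "even j = even i" using linked_odd_length[OF xm] Suc.prems j_def by (auto simp: even_diff_nat)
  then have "walk (partner x) (Suc i) = pair_step j (walk x (Suc j))"
    using Suc pair_step_parity[of j i] j_def by (simp add: Suc_diff_Suc)
  also have "\<dots> = walk x j" using continues_step[OF cj] by simp
  finally show ?case using j_def by simp
qed

lemma linked_pairing:
  assumes xm: "x \<in> linked"
  shows "partner x \<in> linked \<and> partner (partner x) = x \<and> tp (partner x) \<noteq> tp x"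
proof -
  have x: "x \<in> V - V'" and pos: "0 < walk_length x" and end_out: "walk x (walk_length x) \<notin> V'"
    using xm linked_def by auto
  define n where "n = walk_length x"
  define y where "y = partner x"
  have cont: "\<forall>i<n. continues x i" using walk_length_props(1)[OF x] n_def by simp
  have rev: "\<And>i. i \<le> n \<Longrightarrow> walk y i = walk x (n - i)" using walk_reverse[OF xm] y_def n_def by simp
  have cont_y: "\<forall>i<n. continues y i"
  proof (intro allI impI)
    fix i assume i: "i < n"
    define j where "j = n - Suc i"
    have "even j = even i" using linked_odd_length[OF xm] i j_def n_def by (auto simp: even_diff_nat)
    moreover have "walk y i = walk x (Suc j)" using rev[of i] i j_def by (simp add: Suc_diff_Suc)
    moreover have "walk x (Suc j) \<in> pair_dom j" using continues_step[of x j] cont j_def i by simp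
    moreover have "i = 0 \<or> walk x (Suc j) \<in> V'"
    proof (cases "i = 0")
      case False
      then have "Suc j < n" using i j_def by simp
      then show ?thesis using cont unfolding continues_def by auto
    qed simp
    ultimately show "continues y i" unfolding continues_def pair_dom_def by auto
  qed
  have "\<not> continues y n" using rev[of n] x pos n_def unfolding continues_def by simp
  then have len_y: "walk_length y = n" using walk_length_eqI[OF cont_y] by simp
  have "y \<in> V - V'" using walk_in_V[OF _ cont] x end_out y_def partner_def n_def by simp
  moreover have "partner y = x" using rev[of n] len_y partner_def by simp
  moreover have "tp y \<noteq> tp x" using walk_type[OF cont] linked_odd_length[OF xm] y_def partner_def n_def by simp
  ultimately show ?thesis using len_y pos x y_def n_def unfolding linked_def partner_def by auto
qed

lemma pairing_constraints_compose:
  "\<exists>M N Of Fx. pairing tp (V - V') M N \<and>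
     (\<forall>w. pairing_constraints d V M1 N1 O1 F1 w \<and> pairing_constraints d V' M2 N2 O2 F2 w
          \<longrightarrow> pairing_constraints d (V - V') M N Of Fx w)"
proof (intro exI conjI allI impI)
  show "pairing tp (V - V') linked partner" unfolding pairing_def using linked_pairing by (auto simp: linked_def)
  fix w assume "pairing_constraints d V M1 N1 O1 F1 w \<and> pairing_constraints d V' M2 N2 O2 F2 w"
  then have s1: "pairing_constraints d V M1 N1 O1 F1 w" and s2: "pairing_constraints d V' M2 N2 O2 F2 w"
    by auto
  let ?Of = "\<lambda>x. offset O1 O2 x (walk_length x)"
  let ?Fx = "\<lambda>x. (if even (walk_length x) then F1 else F2) (walk x (walk_length x)) - offset O1 O2 x (walk_length x)"
  show "pairing_constraints d (V - V') linked partner ?Of ?Fx w"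
    unfolding pairing_constraints_def
  proof (intro conjI ballI)
    fix x assume "x \<in> linked"
    then show "int d dvd (w (partner x) - w x - ?Of x)"
      using walk_congruence[OF s1 s2 walk_length_props(1)] partner_def linked_def by simp
  next
    fix x assume x3: "x \<in> V - V' - linked"
    define n where "n = walk_length x"
    have cont: "\<forall>i<n. continues x i" and stop: "\<not> continues x n" using walk_length_props x3 n_def by auto
    have "n = 0 \<or> walk x n \<in> V'" using x3 n_def unfolding linked_def by auto
    moreover have "walk x n \<in> V" using walk_in_V[OF _ cont] x3 by simp
    ultimately have "int d dvd (w (walk x n) - (if even n then F1 else F2) (walk x n))"
      using s1 s2 stop unfolding pairing_constraints_def continues_def pair_dom_def
      by (cases "even n") (auto elim: oddE)
    from dvd_diff[OF this walk_congruence[OF s1 s2 cont]]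
    show "int d dvd (w x - ?Fx x)" using n_def by (simp add: algebra_simps)
  qed
qed

end

definition injection_constraints ::
    "nat \<Rightarrow> 'a set \<Rightarrow> 'a set \<Rightarrow> ('a \<Rightarrow> 'a) \<Rightarrow> ('a \<Rightarrow> int) \<Rightarrow> ('a \<Rightarrow> int) \<Rightarrow> ('a \<Rightarrow> int) \<Rightarrow> bool" where
  "injection_constraints d T F \<pi> K R w \<longleftrightarrow>
     (\<forall>x\<in>T. int d dvd (w (\<pi> x) - w x - K x)) \<and> (\<forall>y\<in>F - \<pi> ` T. int d dvd (w y - R y))"

lemma pairing_Not: "pairing (\<lambda>x. \<not> tp x) V M N = pairing tp V M N"
  unfolding pairing_def by auto

lemma pairing_of_injection:
  assumes inj: "inj_on \<pi> T" and im: "\<pi> ` T \<subseteq> F" and tpT: "\<forall>x\<in>T. tp x" and tpF: "\<forall>y\<in>F. \<not> tp y"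
  shows "\<exists>M N Of Fx. pairing tp (T \<union> F) M N \<and>
     (\<forall>w. injection_constraints d T F \<pi> K R w \<longrightarrow> pairing_constraints d (T \<union> F) M N Of Fx w)"
proof -
  let ?inv = "the_inv_into T \<pi>"
  define N where "N x = (if x \<in> T then \<pi> x else ?inv x)" for x
  define Of where "Of x = (if x \<in> T then K x else - K (?inv x))" for x
  have inv: "\<And>x. x \<in> T \<Longrightarrow> ?inv (\<pi> x) = x" using the_inv_into_f_f[OF inj] by simp
  have disj: "T \<inter> F = {}" using tpT tpF by auto
  have "pairing tp (T \<union> F) (T \<union> \<pi> ` T) N"
    unfolding pairing_def N_def using im inv disj tpT tpF by auto
  moreover have "pairing_constraints d (T \<union> F) (T \<union> \<pi> ` T) N Of R w"
    if "injection_constraints d T F \<pi> K R w" for w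
  proof -
    have "int d dvd - (w (\<pi> x) - w x - K x)" if "x \<in> T" for x
      using \<open>injection_constraints d T F \<pi> K R w\<close> that
      unfolding injection_constraints_def dvd_minus_iff by blast
    then show ?thesis using that disj inv unfolding pairing_constraints_def injection_constraints_def
      by (auto simp: N_def Of_def algebra_simps)
  qed
  ultimately show ?thesis by blast
qed

text \<open>Paired nodes keep their partner; the unpaired nodes of the smaller type are sent injectively
  to unpaired nodes of the other type, with offset the difference of their fixed values.\<close>
lemma injection_of_pairing:
  assumes fin: "finite V" and pr: "pairing tp V M N"
    and le: "card {x\<in>V. tp x} \<le> card {x\<in>V. \<not> tp x}"
  shows "\<exists>\<pi> K R. inj_on \<pi> {x\<in>V. tp x} \<and> \<pi> ` {x\<in>V. tp x} \<subseteq> {x\<in>V. \<not> tp x} \<and>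
     (\<forall>w. pairing_constraints d V M N Of Fx w \<longrightarrow>
        injection_constraints d {x\<in>V. tp x} {x\<in>V. \<not> tp x} \<pi> K R w)"
proof -
  let ?T = "{x\<in>V. tp x}" and ?F = "{x\<in>V. \<not> tp x}"
  have MV: "M \<subseteq> V" and NM: "\<And>x. x \<in> M \<Longrightarrow> N x \<in> M \<and> N (N x) = x \<and> tp (N x) \<noteq> tp x"
    using pr unfolding pairing_def by auto
  have "bij_betw N (?T \<inter> M) (?F \<inter> M)"
  proof (rule bij_betw_byWitness[where f' = N])
    show "\<forall>x\<in>?T \<inter> M. N (N x) = x" "\<forall>y\<in>?F \<inter> M. N (N y) = y" using NM by blast+
    show "N ` (?T \<inter> M) \<subseteq> ?F \<inter> M" "N ` (?F \<inter> M) \<subseteq> ?T \<inter> M" using NM MV by auto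
  qed
  then have "card (?T - M) \<le> card (?F - M)"
    using le fin by (simp add: card_Diff_subset_Int bij_betw_same_card)
  then obtain h where h: "h ` (?T - M) \<subseteq> ?F - M" and inj_h: "inj_on h (?T - M)"
    using card_le_inj[of "?T - M" "?F - M"] fin by auto
  define \<pi> where "\<pi> x = (if x \<in> M then N x else h x)" for x
  define K where "K x = (if x \<in> M then Of x else Fx (h x) - Fx x)" for x
  have "inj_on \<pi> ?T"
  proof (rule inj_onI)
    fix x y assume x: "x \<in> ?T" and y: "y \<in> ?T" and eq: "\<pi> x = \<pi> y"
    have "\<pi> z \<in> M \<longleftrightarrow> z \<in> M" if "z \<in> ?T" for z using that NM h unfolding \<pi>_def by auto
    then have "x \<in> M \<longleftrightarrow> y \<in> M" using x y eq by metis
    moreover have "x = y" if "x \<in> M" "y \<in> M"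
      using eq that NM[of x] NM[of y] unfolding \<pi>_def by metis
    ultimately show "x = y" using eq inj_h x y unfolding \<pi>_def inj_on_def by auto
  qed
  moreover have "\<pi> ` ?T \<subseteq> ?F" using h NM MV unfolding \<pi>_def by auto
  moreover have "injection_constraints d ?T ?F \<pi> K Fx w"
    if sat: "pairing_constraints d V M N Of Fx w" for w
  proof -
    have unpaired: "int d dvd (w x - Fx x)" if "x \<in> V - M" for x
      using sat that unfolding pairing_constraints_def by blast
    have "int d dvd (w (h x) - w x - (Fx (h x) - Fx x))" if "x \<in> ?T - M" for x
      using dvd_diff[OF unpaired[of "h x"] unpaired[of x]] h that by (auto simp: algebra_simps)
    moreover have "int d dvd (w (N x) - w x - Of x)" if "x \<in> M" for x
      using sat that unfolding pairing_constraints_def by blast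
    ultimately have paired: "int d dvd (w (\<pi> x) - w x - K x)" if "x \<in> ?T" for x
      using that unfolding \<pi>_def K_def by (cases "x \<in> M") auto
    have "y \<notin> M" if "y \<in> ?F - \<pi> ` ?T" for y
    proof
      assume "y \<in> M"
      then have "N y \<in> ?T \<inter> M" "\<pi> (N y) = y" using that NM[of y] MV unfolding \<pi>_def by auto
      then show False using that by (metis DiffE IntD1 image_eqI)
    qed
    then show ?thesis using paired unpaired unfolding injection_constraints_def by blast
  qed
  ultimately show ?thesis by blast
qed

definition nodes :: "nat set \<Rightarrow> nat set \<Rightarrow> (nat + nat) set" where
  "nodes DS AS = Inl ` DS \<union> Inr ` AS"

definition val :: "cfg \<Rightarrow> nat + nat \<Rightarrow> int" where
  "val c x = (case x of Inl i \<Rightarrow> int (fst c i) | Inr j \<Rightarrow> int (snd c j))"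

lemma val_simps [simp]: "val c (Inl i) = int (fst c i)" "val c (Inr j) = int (snd c j)"
  by (simp_all add: val_def)

lemma nodes_isl: "{x \<in> nodes DS AS. isl x} = Inl ` DS" "{x \<in> nodes DS AS. \<not> isl x} = Inr ` AS"
  unfolding nodes_def by auto

lemma basis_mem: "(f, g) \<in> basis d DS AS \<Longrightarrow> i \<in> DS \<Longrightarrow> f i < d"
  "(f, g) \<in> basis d DS AS \<Longrightarrow> j \<in> AS \<Longrightarrow> g j < d"
  unfolding basis_def by (auto simp: PiE_iff)

lemma dvd_of_eq_mod:
  assumes "a = (b + k) mod d"
  shows "int d dvd (int a - int b - int k)"
proof -
  have "int a = (int b + int k) mod int d" using assms by (simp add: of_nat_mod)
  then have "int a - (int b + int k) = - (int d * ((int b + int k) div int d))"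
    by (simp add: minus_mod_eq_mult_div[symmetric])
  then have "int a - int b - int k = int d * (- ((int b + int k) div int d))"
    by (simp add: algebra_simps)
  then show ?thesis by (rule dvdI)
qed

lemma eq_mod_of_dvd:
  assumes "a < d" "int d dvd (int a - int b - k)"
  shows "a = (b + nat (k mod int d)) mod d"
proof -
  have "int a mod int d = (int b + k) mod int d" using assms(2)
    by (simp add: mod_eq_dvd_iff algebra_simps)
  then have "int a = (int b + k) mod int d" using assms(1) by simp
  moreover have "int ((b + nat (k mod int d)) mod d) = (int b + k) mod int d"
    using assms(1) by (simp add: of_nat_mod mod_add_right_eq)
  ultimately show ?thesis by linarith
qed

lemma injection_of_pure_DA:
  assumes "pure_DA d DS AS \<psi>"
  shows "\<exists>\<pi> K R. inj_on \<pi> (Inl ` DS) \<and> \<pi> ` Inl ` DS \<subseteq> Inr ` AS \<and>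
     (\<forall>c\<in>basis d DS AS. \<psi> c \<noteq> 0 \<longrightarrow> injection_constraints d (Inl ` DS) (Inr ` AS) \<pi> K R (val c))"
proof -
  obtain \<pi> k r where inj: "inj_on \<pi> DS" and im: "\<pi> ` DS \<subseteq> AS"
    and supp: "\<forall>f g. (f, g) \<in> basis d DS AS \<and> \<psi> (f, g) \<noteq> 0 \<longrightarrow>
            (\<forall>i\<in>DS. g (\<pi> i) = (f i + k i) mod d) \<and> (\<forall>j\<in>AS - \<pi> ` DS. g j = r j)"
    using assms unfolding pure_DA_def by blast
  let ?\<pi> = "\<lambda>x. Inr (\<pi> (projl x))" and ?K = "\<lambda>x. int (k (projl x))" and ?R = "\<lambda>y. int (r (projr y))"
  have "inj_on ?\<pi> (Inl ` DS)" using inj by (auto simp: inj_on_def)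
  moreover have "?\<pi> ` Inl ` DS \<subseteq> Inr ` AS" using im by auto
  moreover have "injection_constraints d (Inl ` DS) (Inr ` AS) ?\<pi> ?K ?R (val c)"
    if "c \<in> basis d DS AS" "\<psi> c \<noteq> 0" for c
  proof (cases c)
    case (Pair f g)
    then have "\<forall>i\<in>DS. g (\<pi> i) = (f i + k i) mod d" "\<forall>j\<in>AS - \<pi> ` DS. g j = r j"
      using supp that by auto
    then show ?thesis unfolding injection_constraints_def Pair
      by (auto simp: image_image image_iff intro: dvd_of_eq_mod)
  qed
  ultimately show ?thesis by blast
qed

lemma pure_DA_of_injection:
  assumes "0 < d" and inj: "inj_on \<pi> (Inl ` DS)" and im: "\<pi> ` Inl ` DS \<subseteq> Inr ` AS"
    and supp: "\<forall>c\<in>basis d DS AS. \<psi> c \<noteq> 0 \<longrightarrow> injection_constraints d (Inl ` DS) (Inr ` AS) \<pi> K R (val c)"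
  shows "pure_DA d DS AS \<psi>"
proof -
  define \<sigma> where "\<sigma> i = projr (\<pi> (Inl i))" for i
  define k where "k i = nat (K (Inl i) mod int d)" for i
  define r where "r j = nat (R (Inr j) mod int d)" for j
  have \<pi>_Inl: "\<pi> (Inl i) = Inr (\<sigma> i)" "\<sigma> i \<in> AS" if "i \<in> DS" for i
  proof -
    have "\<pi> (Inl i) \<in> Inr ` AS" by (rule subsetD[OF im imageI[OF imageI[OF that]]])
    then obtain y where "\<pi> (Inl i) = Inr y" "y \<in> AS" by (rule imageE)
    then show "\<pi> (Inl i) = Inr (\<sigma> i)" "\<sigma> i \<in> AS" unfolding \<sigma>_def by simp_all
  qed
  have inj_\<sigma>: "inj_on \<sigma> DS"
  proof (rule inj_onI)
    fix i i' assume i: "i \<in> DS" "i' \<in> DS" and "\<sigma> i = \<sigma> i'"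
    then have "\<pi> (Inl i) = \<pi> (Inl i')" using \<pi>_Inl by simp
    then show "i = i'" using inj_onD[OF inj] i by blast
  qed
  have bounded: "k i < d" "r j < d" for i j
    using assms(1) unfolding k_def r_def by (simp_all add: nat_less_iff)
  have ic: "injection_constraints d (Inl ` DS) (Inr ` AS) \<pi> K R (val (f, g))"
    if "(f, g) \<in> basis d DS AS" "\<psi> (f, g) \<noteq> 0" for f g
    using supp that by blast
  have paired: "g (\<sigma> i) = (f i + k i) mod d"
    if fg: "(f, g) \<in> basis d DS AS" "\<psi> (f, g) \<noteq> 0" and i: "i \<in> DS" for f g i
  proof -
    have "int d dvd (val (f, g) (\<pi> (Inl i)) - val (f, g) (Inl i) - K (Inl i))"
      using ic[OF fg] i unfolding injection_constraints_def by blast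
    then have "int d dvd (int (g (\<sigma> i)) - int (f i) - K (Inl i))" using \<pi>_Inl[OF i] by simp
    from eq_mod_of_dvd[OF basis_mem(2)[OF fg(1) \<pi>_Inl(2)[OF i]] this] show ?thesis unfolding k_def .
  qed
  have unpaired: "g j = r j"
    if fg: "(f, g) \<in> basis d DS AS" "\<psi> (f, g) \<noteq> 0" and j: "j \<in> AS - \<sigma> ` DS" for f g j
  proof -
    have "Inr j \<notin> \<pi> ` Inl ` DS" using j \<pi>_Inl by auto
    then have "Inr j \<in> Inr ` AS - \<pi> ` Inl ` DS" using j by blast
    then have "int d dvd (val (f, g) (Inr j) - R (Inr j))"
      using ic[OF fg] unfolding injection_constraints_def by blast
    then have "int d dvd (int (g j) - int 0 - R (Inr j))" by simp
    from eq_mod_of_dvd[OF basis_mem(2)[OF fg(1)] this] j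
    show ?thesis using assms(1) unfolding r_def by (simp add: nat_less_iff)
  qed
  show ?thesis unfolding pure_DA_def
    by (intro exI[of _ \<sigma>] exI[of _ k] exI[of _ r] conjI ballI allI impI)
      (use inj_\<sigma> \<pi>_Inl bounded paired unpaired in auto)
qed

lemma injection_of_pure_AD:
  assumes "pure_AD d DS AS \<psi>"
  shows "\<exists>\<pi> K R. inj_on \<pi> (Inr ` AS) \<and> \<pi> ` Inr ` AS \<subseteq> Inl ` DS \<and>
     (\<forall>c\<in>basis d DS AS. \<psi> c \<noteq> 0 \<longrightarrow> injection_constraints d (Inr ` AS) (Inl ` DS) \<pi> K R (val c))"
proof -
  obtain \<pi> k r where inj: "inj_on \<pi> AS" and im: "\<pi> ` AS \<subseteq> DS"
    and supp: "\<forall>f g. (f, g) \<in> basis d DS AS \<and> \<psi> (f, g) \<noteq> 0 \<longrightarrow>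
            (\<forall>j\<in>AS. g j = (f (\<pi> j) + k j) mod d) \<and> (\<forall>i\<in>DS - \<pi> ` AS. f i = r i)"
    using assms unfolding pure_AD_def by blast
  let ?\<pi> = "\<lambda>x. Inl (\<pi> (projr x))" and ?K = "\<lambda>x. - int (k (projr x))" and ?R = "\<lambda>y. int (r (projl y))"
  have "inj_on ?\<pi> (Inr ` AS)" using inj by (auto simp: inj_on_def)
  moreover have "?\<pi> ` Inr ` AS \<subseteq> Inl ` DS" using im by auto
  moreover have "injection_constraints d (Inr ` AS) (Inl ` DS) ?\<pi> ?K ?R (val c)"
    if "c \<in> basis d DS AS" "\<psi> c \<noteq> 0" for c
  proof (cases c)
    case (Pair f g)
    then have g: "\<forall>j\<in>AS. g j = (f (\<pi> j) + k j) mod d" and f: "\<forall>i\<in>DS - \<pi> ` AS. f i = r i"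
      using supp that by auto
    have "int d dvd (int (f (\<pi> j)) - int (g j) + int (k j))" if "j \<in> AS" for j
    proof -
      have "int d dvd (int (g j) - int (f (\<pi> j)) - int (k j))" using g that dvd_of_eq_mod by blast
      then have "int d dvd - (int (g j) - int (f (\<pi> j)) - int (k j))" by (simp only: dvd_minus_iff)
      then show ?thesis by (simp add: algebra_simps)
    qed
    then show ?thesis using f unfolding injection_constraints_def Pair
      by (auto simp: image_image image_iff)
  qed
  ultimately show ?thesis by blast
qed

lemma pure_AD_of_injection:
  assumes "0 < d" and inj: "inj_on \<pi> (Inr ` AS)" and im: "\<pi> ` Inr ` AS \<subseteq> Inl ` DS"
    and supp: "\<forall>c\<in>basis d DS AS. \<psi> c \<noteq> 0 \<longrightarrow> injection_constraints d (Inr ` AS) (Inl ` DS) \<pi> K R (val c)"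
  shows "pure_AD d DS AS \<psi>"
proof -
  define \<sigma> where "\<sigma> j = projl (\<pi> (Inr j))" for j
  define k where "k j = nat (- K (Inr j) mod int d)" for j
  define r where "r i = nat (R (Inl i) mod int d)" for i
  have \<pi>_Inr: "\<pi> (Inr j) = Inl (\<sigma> j)" "\<sigma> j \<in> DS" if "j \<in> AS" for j
  proof -
    have "\<pi> (Inr j) \<in> Inl ` DS" by (rule subsetD[OF im imageI[OF imageI[OF that]]])
    then obtain y where "\<pi> (Inr j) = Inl y" "y \<in> DS" by (rule imageE)
    then show "\<pi> (Inr j) = Inl (\<sigma> j)" "\<sigma> j \<in> DS" unfolding \<sigma>_def by simp_all
  qed
  have inj_\<sigma>: "inj_on \<sigma> AS"
  proof (rule inj_onI)
    fix j j' assume j: "j \<in> AS" "j' \<in> AS" and "\<sigma> j = \<sigma> j'"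
    then have "\<pi> (Inr j) = \<pi> (Inr j')" using \<pi>_Inr by simp
    then show "j = j'" using inj_onD[OF inj] j by blast
  qed
  have bounded: "k j < d" "r i < d" for i j
    using assms(1) unfolding k_def r_def by (simp_all add: nat_less_iff)
  have ic: "injection_constraints d (Inr ` AS) (Inl ` DS) \<pi> K R (val (f, g))"
    if "(f, g) \<in> basis d DS AS" "\<psi> (f, g) \<noteq> 0" for f g
    using supp that by blast
  have paired: "g j = (f (\<sigma> j) + k j) mod d"
    if fg: "(f, g) \<in> basis d DS AS" "\<psi> (f, g) \<noteq> 0" and j: "j \<in> AS" for f g j
  proof -
    have "int d dvd (val (f, g) (\<pi> (Inr j)) - val (f, g) (Inr j) - K (Inr j))"
      using ic[OF fg] j unfolding injection_constraints_def by blast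
    then have "int d dvd - (int (f (\<sigma> j)) - int (g j) - K (Inr j))"
      unfolding dvd_minus_iff using \<pi>_Inr[OF j] by simp
    then have "int d dvd (int (g j) - int (f (\<sigma> j)) - - K (Inr j))" by (simp add: algebra_simps)
    from eq_mod_of_dvd[OF basis_mem(2)[OF fg(1) j] this] show ?thesis unfolding k_def .
  qed
  have unpaired: "f i = r i"
    if fg: "(f, g) \<in> basis d DS AS" "\<psi> (f, g) \<noteq> 0" and i: "i \<in> DS - \<sigma> ` AS" for f g i
  proof -
    have "Inl i \<notin> \<pi> ` Inr ` AS" using i \<pi>_Inr by auto
    then have "Inl i \<in> Inl ` DS - \<pi> ` Inr ` AS" using i by blast
    then have "int d dvd (val (f, g) (Inl i) - R (Inl i))"
      using ic[OF fg] unfolding injection_constraints_def by blast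
    then have "int d dvd (int (f i) - int 0 - R (Inl i))" by simp
    from eq_mod_of_dvd[OF basis_mem(1)[OF fg(1)] this] i
    show ?thesis using assms(1) unfolding r_def by (simp add: nat_less_iff)
  qed
  show ?thesis unfolding pure_AD_def
    by (intro exI[of _ \<sigma>] exI[of _ k] exI[of _ r] conjI ballI allI impI)
      (use inj_\<sigma> \<pi>_Inr bounded paired unpaired in auto)
qed

text \<open>\<open>pure_DA\<close> and \<open>pure_AD\<close> are the special case of an injective pairing of the smaller colour;
  the general form is the one that survives contraction.\<close>
definition paired_support :: "nat \<Rightarrow> nat set \<Rightarrow> nat set \<Rightarrow> vec \<Rightarrow> bool" where
  "paired_support d DS AS \<psi> \<longleftrightarrow> (\<exists>M N Of Fx. pairing isl (nodes DS AS) M N \<and>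
     (\<forall>c\<in>basis d DS AS. \<psi> c \<noteq> 0 \<longrightarrow> pairing_constraints d (nodes DS AS) M N Of Fx (val c)))"

lemma paired_support_of_injection:
  assumes inj: "inj_on \<pi> T" and im: "\<pi> ` T \<subseteq> F" and TF: "T \<union> F = nodes DS AS"
    and tpT: "\<forall>x\<in>T. tp x" and tpF: "\<forall>y\<in>F. \<not> tp y" and tp: "tp = isl \<or> tp = (\<lambda>x. \<not> isl x)"
    and supp: "\<forall>c\<in>basis d DS AS. \<psi> c \<noteq> 0 \<longrightarrow> injection_constraints d T F \<pi> K R (val c)"
  shows "paired_support d DS AS \<psi>"
proof -
  obtain M N Of Fx where pr: "pairing tp (nodes DS AS) M N"
    and sat: "\<forall>w. injection_constraints d T F \<pi> K R w \<longrightarrow> pairing_constraints d (nodes DS AS) M N Of Fx w"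
    using pairing_of_injection[OF inj im tpT tpF, of d K R] unfolding TF by blast
  have "pairing isl (nodes DS AS) M N" using pr tp pairing_Not[of isl] by auto
  then show ?thesis using supp sat unfolding paired_support_def by blast
qed

lemma pure_state_paired_support:
  assumes "pure_state d DS AS \<psi>"
  shows "paired_support d DS AS \<psi>"
proof -
  have nodes: "Inl ` DS \<union> Inr ` AS = nodes DS AS" "Inr ` AS \<union> Inl ` DS = nodes DS AS"
    unfolding nodes_def by auto
  consider "pure_DA d DS AS \<psi>" | "pure_AD d DS AS \<psi>" using assms unfolding pure_state_def by blast
  then show ?thesis
  proof cases
    case 1
    obtain \<pi> K R where "inj_on \<pi> (Inl ` DS)" "\<pi> ` Inl ` DS \<subseteq> Inr ` AS"
      "\<forall>c\<in>basis d DS AS. \<psi> c \<noteq> 0 \<longrightarrow> injection_constraints d (Inl ` DS) (Inr ` AS) \<pi> K R (val c)"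
      using injection_of_pure_DA[OF 1] by blast
    from paired_support_of_injection[where tp = isl, OF this(1,2) nodes(1) _ _ _ this(3)]
    show ?thesis by simp
  next
    case 2
    obtain \<pi> K R where "inj_on \<pi> (Inr ` AS)" "\<pi> ` Inr ` AS \<subseteq> Inl ` DS"
      "\<forall>c\<in>basis d DS AS. \<psi> c \<noteq> 0 \<longrightarrow> injection_constraints d (Inr ` AS) (Inl ` DS) \<pi> K R (val c)"
      using injection_of_pure_AD[OF 2] by blast
    from paired_support_of_injection[where tp = "\<lambda>x. \<not> isl x", OF this(1,2) nodes(2) _ _ _ this(3)]
    show ?thesis by simp
  qed
qed

lemma pure_state_of_paired_support:
  assumes "paired_support d DS AS \<psi>" "unit_vec d DS AS \<psi>" "finite DS" "finite AS" "0 < d"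
  shows "pure_state d DS AS \<psi>"
proof -
  obtain M N Of Fx where pr: "pairing isl (nodes DS AS) M N"
    and supp: "\<forall>c\<in>basis d DS AS. \<psi> c \<noteq> 0 \<longrightarrow> pairing_constraints d (nodes DS AS) M N Of Fx (val c)"
    using assms(1) unfolding paired_support_def by blast
  have fin: "finite (nodes DS AS)" using assms(3,4) unfolding nodes_def by simp
  have card: "card (Inl ` DS) = card DS" "card (Inr ` AS) = card AS"
    by (simp_all add: card_image)
  show ?thesis
  proof (cases "card DS \<le> card AS")
    case True
    then have "card {x \<in> nodes DS AS. isl x} \<le> card {x \<in> nodes DS AS. \<not> isl x}"
      unfolding nodes_isl card .
    from injection_of_pairing[OF fin pr this, of d Of Fx, unfolded nodes_isl]
    obtain \<pi> K R where "inj_on \<pi> (Inl ` DS)" "\<pi> ` Inl ` DS \<subseteq> Inr ` AS"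
      "\<forall>w. pairing_constraints d (nodes DS AS) M N Of Fx w \<longrightarrow>
         injection_constraints d (Inl ` DS) (Inr ` AS) \<pi> K R w"
      by blast
    with supp have "pure_DA d DS AS \<psi>" by (blast intro: pure_DA_of_injection[OF assms(5)])
    then show ?thesis using True assms(2) unfolding pure_state_def by blast
  next
    case False
    have pr': "pairing (\<lambda>x. \<not> isl x) (nodes DS AS) M N" using pr by (simp only: pairing_Not)
    have "card {x \<in> nodes DS AS. \<not> isl x} \<le> card {x \<in> nodes DS AS. \<not> \<not> isl x}"
      using False unfolding not_not nodes_isl card by simp
    from injection_of_pairing[OF fin pr' this, of d Of Fx, unfolded not_not nodes_isl]
    obtain \<pi> K R where "inj_on \<pi> (Inr ` AS)" "\<pi> ` Inr ` AS \<subseteq> Inl ` DS"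
      "\<forall>w. pairing_constraints d (nodes DS AS) M N Of Fx w \<longrightarrow>
         injection_constraints d (Inr ` AS) (Inl ` DS) \<pi> K R w"
      by blast
    with supp have "pure_AD d DS AS \<psi>" by (blast intro: pure_AD_of_injection[OF assms(5)])
    then show ?thesis using False assms(2) unfolding pure_state_def by simp
  qed
qed

lemma finite_basis: "finite DS \<Longrightarrow> finite AS \<Longrightarrow> finite (basis d DS AS)"
  unfolding basis_def by (auto intro!: finite_PiE)

lemma join_in_basis:
  assumes "a \<in> basis d DS' AS'" "r \<in> basis d (DS - DS') (AS - AS')" "DS' \<subseteq> DS" "AS' \<subseteq> AS"
  shows "join DS' AS' a r \<in> basis d DS AS"
  using assms unfolding basis_def join_def by (auto simp: PiE_iff extensional_def)

lemma val_join: "val (join DS' AS' a r) x = (if x \<in> nodes DS' AS' then val a x else val r x)"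
  by (cases x) (auto simp: join_def nodes_def)

definition partial_inner :: "nat \<Rightarrow> nat set \<Rightarrow> nat set \<Rightarrow> nat set \<Rightarrow> nat set \<Rightarrow> vec \<Rightarrow> vec \<Rightarrow> vec" where
  "partial_inner d DS AS DS' AS' \<phi> \<psi> = (\<lambda>r. if r \<in> basis d (DS - DS') (AS - AS') then
     (\<Sum>b\<in>basis d DS' AS'. cnj (\<phi> b) * \<psi> (join DS' AS' b r)) else 0)"

lemma paired_support_partial_inner:
  assumes "paired_support d DS' AS' \<phi>" "paired_support d DS AS \<psi>"
    and "finite DS" "finite AS" "DS' \<subseteq> DS" "AS' \<subseteq> AS"
  shows "paired_support d (DS - DS') (AS - AS') (partial_inner d DS AS DS' AS' \<phi> \<psi>)"
proof -
  obtain M2 N2 O2 F2 where pr2: "pairing isl (nodes DS' AS') M2 N2"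
    and supp2: "\<forall>c\<in>basis d DS' AS'. \<phi> c \<noteq> 0 \<longrightarrow> pairing_constraints d (nodes DS' AS') M2 N2 O2 F2 (val c)"
    using assms(1) unfolding paired_support_def by blast
  obtain M1 N1 O1 F1 where pr1: "pairing isl (nodes DS AS) M1 N1"
    and supp1: "\<forall>c\<in>basis d DS AS. \<psi> c \<noteq> 0 \<longrightarrow> pairing_constraints d (nodes DS AS) M1 N1 O1 F1 (val c)"
    using assms(2) unfolding paired_support_def by blast
  have nodes_diff: "nodes (DS - DS') (AS - AS') = nodes DS AS - nodes DS' AS'"
    using assms(5,6) unfolding nodes_def by auto
  interpret two_pairings "nodes DS AS" "nodes DS' AS'" isl M1 M2 N1 N2
    using assms(3-6) pr1 pr2 unfolding nodes_def by unfold_locales auto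
  obtain M N Of Fx where pr: "pairing isl (nodes DS AS - nodes DS' AS') M N"
    and compose: "\<And>w. pairing_constraints d (nodes DS AS) M1 N1 O1 F1 w \<Longrightarrow>
        pairing_constraints d (nodes DS' AS') M2 N2 O2 F2 w \<Longrightarrow>
        pairing_constraints d (nodes DS AS - nodes DS' AS') M N Of Fx w"
    using pairing_constraints_compose[of d O1 F1 O2 F2] by blast
  have "pairing_constraints d (nodes DS AS - nodes DS' AS') M N Of Fx (val r)"
    if r: "r \<in> basis d (DS - DS') (AS - AS')" and nz: "partial_inner d DS AS DS' AS' \<phi> \<psi> r \<noteq> 0" for r
  proof -
    have "(\<Sum>b\<in>basis d DS' AS'. cnj (\<phi> b) * \<psi> (join DS' AS' b r)) \<noteq> 0"
      using nz r unfolding partial_inner_def by simp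
    then obtain b where b: "b \<in> basis d DS' AS'" and nz_b: "cnj (\<phi> b) * \<psi> (join DS' AS' b r) \<noteq> 0"
      by (meson sum.neutral)
    let ?w = "val (join DS' AS' b r)"
    have "\<forall>x\<in>nodes DS' AS'. ?w x = val b x" "\<forall>x\<in>nodes DS AS - nodes DS' AS'. ?w x = val r x"
      by (simp_all add: val_join)
    note agree = pairing_constraints_cong[OF pr2 this(1)] pairing_constraints_cong[OF pr this(2)]
    have "pairing_constraints d (nodes DS AS) M1 N1 O1 F1 ?w"
      using supp1 join_in_basis[OF b r assms(5,6)] nz_b by simp
    moreover have "pairing_constraints d (nodes DS' AS') M2 N2 O2 F2 ?w"
      using supp2 b nz_b agree(1) by simp
    ultimately have "pairing_constraints d (nodes DS AS - nodes DS' AS') M N Of Fx ?w" by (rule compose)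
    then show ?thesis using agree(2) by simp
  qed
  then show ?thesis using pr unfolding paired_support_def nodes_diff by blast
qed

lemma nonneg_comb_pure_zero: "nonneg_comb_pure d DS AS (\<lambda>_ _. 0)"
  unfolding nonneg_comb_pure_def by (rule exI[of _ 0]) simp

lemma nonneg_comb_pure_add:
  assumes "nonneg_comb_pure d DS AS \<sigma>1" "nonneg_comb_pure d DS AS \<sigma>2"
  shows "nonneg_comb_pure d DS AS (\<lambda>a b. \<sigma>1 a b + \<sigma>2 a b)"
proof -
  obtain N1 :: nat and c1 v1 where h1: "\<forall>i<N1. 0 \<le> c1 i \<and> pure_state d DS AS (v1 i)"
    and e1: "\<sigma>1 = (\<lambda>a b. \<Sum>i<N1. complex_of_real (c1 i) * proj (v1 i) a b)"
    using assms(1) unfolding nonneg_comb_pure_def by blast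
  obtain N2 :: nat and c2 v2 where h2: "\<forall>i<N2. 0 \<le> c2 i \<and> pure_state d DS AS (v2 i)"
    and e2: "\<sigma>2 = (\<lambda>a b. \<Sum>i<N2. complex_of_real (c2 i) * proj (v2 i) a b)"
    using assms(2) unfolding nonneg_comb_pure_def by blast
  define c where "c i = (if i < N1 then c1 i else c2 (i - N1))" for i
  define v where "v i = (if i < N1 then v1 i else v2 (i - N1))" for i
  have sum_split: "(\<Sum>i<N1 + N2. f i) = (\<Sum>i<N1. f i) + (\<Sum>i<N2. f (N1 + i))" for f :: "nat \<Rightarrow> complex"
    by (induction N2) (simp_all add: algebra_simps)
  show ?thesis unfolding nonneg_comb_pure_def
  proof (intro exI[of _ "N1 + N2"] exI[of _ c] exI[of _ v] conjI)
    show "\<forall>i<N1 + N2. 0 \<le> c i \<and> pure_state d DS AS (v i)"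
      using h1 h2 unfolding c_def v_def by auto
    show "(\<lambda>a b. \<sigma>1 a b + \<sigma>2 a b) = (\<lambda>a b. \<Sum>i<N1 + N2. complex_of_real (c i) * proj (v i) a b)"
      unfolding e1 e2 sum_split by (simp add: c_def v_def)
  qed
qed

lemma nonneg_comb_pure_scale:
  assumes "nonneg_comb_pure d DS AS \<sigma>" "0 \<le> s"
  shows "nonneg_comb_pure d DS AS (\<lambda>a b. complex_of_real s * \<sigma> a b)"
proof -
  obtain N :: nat and c v where h: "\<forall>i<N. 0 \<le> c i \<and> pure_state d DS AS (v i)"
    and e: "\<sigma> = (\<lambda>a b. \<Sum>i<N. complex_of_real (c i) * proj (v i) a b)"
    using assms(1) unfolding nonneg_comb_pure_def by blast
  show ?thesis unfolding nonneg_comb_pure_def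
  proof (intro exI[of _ N] exI[of _ "\<lambda>i. s * c i"] exI[of _ v] conjI)
    show "\<forall>i<N. 0 \<le> s * c i \<and> pure_state d DS AS (v i)" using h assms(2) by auto
    show "(\<lambda>a b. complex_of_real s * \<sigma> a b) = (\<lambda>a b. \<Sum>i<N. complex_of_real (s * c i) * proj (v i) a b)"
      unfolding e by (simp add: fun_eq_iff sum_distrib_left mult.assoc)
  qed
qed

lemma nonneg_comb_pure_sum:
  assumes "finite A" "\<And>x. x \<in> A \<Longrightarrow> nonneg_comb_pure d DS AS (X x)"
  shows "nonneg_comb_pure d DS AS (\<lambda>a b. \<Sum>x\<in>A. X x a b)"
  using assms
proof (induction A rule: finite_induct)
  case empty
  then show ?case using nonneg_comb_pure_zero by simp
next
  case (insert x F)
  then show ?case using nonneg_comb_pure_add[of d DS AS "X x" "\<lambda>a b. \<Sum>y\<in>F. X y a b"] by simp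
qed

text \<open>A nonzero vector with paired support, normalized, is a pure state.\<close>
lemma nonneg_comb_pure_proj:
  assumes "paired_support d DS AS u" "in_space d DS AS u" "finite DS" "finite AS" "0 < d"
  shows "nonneg_comb_pure d DS AS (proj u)"
proof (cases "u = (\<lambda>_. 0)")
  case True
  then show ?thesis using nonneg_comb_pure_zero unfolding proj_def by simp
next
  case False
  then obtain c0 where c0: "u c0 \<noteq> 0" by (metis ext)
  then have c0_basis: "c0 \<in> basis d DS AS" using assms(2) unfolding in_space_def by metis
  define s where "s = (\<Sum>c\<in>basis d DS AS. (cmod (u c))\<^sup>2)"
  have "(cmod (u c0))\<^sup>2 \<le> s" unfolding s_def
    by (rule member_le_sum[OF c0_basis]) (auto simp: finite_basis assms(3,4))
  moreover have "0 < (cmod (u c0))\<^sup>2" using c0 by simp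
  ultimately have s_pos: "0 < s" by linarith
  define v where "v c = u c / complex_of_real (sqrt s)" for c
  have "(\<Sum>c\<in>basis d DS AS. (cmod (v c))\<^sup>2) = s / (sqrt s)\<^sup>2"
    unfolding v_def s_def by (simp add: norm_divide power_divide sum_divide_distrib)
  then have "unit_vec d DS AS v" using s_pos assms(2) unfolding unit_vec_def in_space_def v_def by simp
  moreover have "paired_support d DS AS v"
    using assms(1) s_pos unfolding paired_support_def v_def by simp
  ultimately have "pure_state d DS AS v" using pure_state_of_paired_support assms(3-5) by blast
  moreover have "proj u = (\<lambda>a b. \<Sum>i<Suc 0. complex_of_real s * proj v a b)"
  proof -
    have "complex_of_real (sqrt s) * complex_of_real (sqrt s) = complex_of_real s"
      using s_pos by (simp flip: of_real_mult)
    then show ?thesis using s_pos unfolding proj_def v_def by (auto simp: fun_eq_iff)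
  qed
  ultimately show ?thesis unfolding nonneg_comb_pure_def using s_pos
    by (intro exI[of _ "Suc 0"] exI[of _ "\<lambda>_. s"] exI[of _ "\<lambda>_. v"]) simp
qed

lemma trace_nonneg_comb:
  assumes "\<forall>i<N. pure_state d DS AS (\<psi> i)"
  shows "(\<Sum>r\<in>basis d DS AS. \<Sum>i<N. complex_of_real (c i) * proj (\<psi> i) r r) = complex_of_real (\<Sum>i<N. c i)"
proof -
  have "(\<Sum>r\<in>basis d DS AS. proj (\<psi> i) r r) = 1" if "i < N" for i
  proof -
    have "(\<Sum>r\<in>basis d DS AS. proj (\<psi> i) r r) = complex_of_real (\<Sum>r\<in>basis d DS AS. (cmod (\<psi> i r))\<^sup>2)"
      unfolding of_real_sum by (rule sum.cong) (simp_all only: proj_def complex_norm_square)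
    then show ?thesis using assms that unfolding pure_state_def unit_vec_def by simp
  qed
  then have "(\<Sum>i<N. complex_of_real (c i) * (\<Sum>r\<in>basis d DS AS. proj (\<psi> i) r r)) =
      complex_of_real (\<Sum>i<N. c i)" by simp
  then show ?thesis by (simp add: sum.swap[of _ "basis d DS AS"] sum_distrib_left)
qed

lemma valid_state_iff:
  "valid_state d DS AS \<rho> \<longleftrightarrow> nonneg_comb_pure d DS AS \<rho> \<and> (\<Sum>c\<in>basis d DS AS. \<rho> c c) = 1"
proof
  assume "valid_state d DS AS \<rho>"
  then obtain N :: nat and p \<psi> where h: "\<forall>i<N. 0 \<le> p i \<and> pure_state d DS AS (\<psi> i)"
    and "(\<Sum>i<N. p i) = 1" and e: "\<rho> = (\<lambda>a b. \<Sum>i<N. complex_of_real (p i) * proj (\<psi> i) a b)"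
    unfolding valid_state_def by blast
  then show "nonneg_comb_pure d DS AS \<rho> \<and> (\<Sum>c\<in>basis d DS AS. \<rho> c c) = 1"
    using trace_nonneg_comb[of N d DS AS \<psi> p] unfolding nonneg_comb_pure_def by auto
next
  assume "nonneg_comb_pure d DS AS \<rho> \<and> (\<Sum>c\<in>basis d DS AS. \<rho> c c) = 1"
  then obtain N :: nat and p \<psi> where h: "\<forall>i<N. 0 \<le> p i \<and> pure_state d DS AS (\<psi> i)"
    and e: "\<rho> = (\<lambda>a b. \<Sum>i<N. complex_of_real (p i) * proj (\<psi> i) a b)"
    and "(\<Sum>c\<in>basis d DS AS. \<rho> c c) = 1"
    unfolding nonneg_comb_pure_def by blast
  then have "complex_of_real (\<Sum>i<N. p i) = 1" using trace_nonneg_comb[of N d DS AS \<psi> p] by simp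
  then have "(\<Sum>i<N. p i) = 1" by (simp only: of_real_eq_1_iff)
  then show "valid_state d DS AS \<rho>" using h e unfolding valid_state_def by blast
qed

lemma nonneg_comb_pure_cases:
  assumes "nonneg_comb_pure d DS AS \<sigma>"
  shows "\<sigma> = (\<lambda>_ _. 0) \<or>
    (\<exists>c::real. c > 0 \<and> (\<exists>\<tau>. valid_state d DS AS \<tau> \<and> \<sigma> = (\<lambda>a b. complex_of_real c * \<tau> a b)))"
proof -
  obtain N :: nat and c v where h: "\<forall>i<N. 0 \<le> c i \<and> pure_state d DS AS (v i)"
    and e: "\<sigma> = (\<lambda>a b. \<Sum>i<N. complex_of_real (c i) * proj (v i) a b)"
    using assms unfolding nonneg_comb_pure_def by blast
  define W where "W = (\<Sum>i<N. c i)"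
  have "0 \<le> W" unfolding W_def using h by (intro sum_nonneg) auto
  show ?thesis
  proof (cases "W = 0")
    case True
    then have "\<forall>i\<in>{..<N}. c i = 0" using h sum_nonneg_eq_0_iff[of "{..<N}" c] unfolding W_def by auto
    then show ?thesis unfolding e by (simp add: fun_eq_iff)
  next
    case False
    with \<open>0 \<le> W\<close> have W: "0 < W" by simp
    define \<tau> where "\<tau> = (\<lambda>a b. \<Sum>i<N. complex_of_real (c i / W) * proj (v i) a b)"
    have "valid_state d DS AS \<tau>" unfolding valid_state_def \<tau>_def
    proof (intro exI conjI)
      show "\<forall>i<N. 0 \<le> c i / W \<and> pure_state d DS AS (v i)" using h W by auto
      show "(\<Sum>i<N. c i / W) = 1" using W unfolding W_def by (simp flip: sum_divide_distrib)
    qed (rule refl)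
    moreover have "\<sigma> = (\<lambda>a b. complex_of_real W * \<tau> a b)"
      unfolding e \<tau>_def using W by (simp add: fun_eq_iff sum_distrib_left)
    ultimately show ?thesis using W by blast
  qed
qed

lemma sum_swap4:
  "(\<Sum>a\<in>A. \<Sum>b\<in>B. \<Sum>i\<in>I. \<Sum>j\<in>J. f a b i j) = (\<Sum>i\<in>I. \<Sum>j\<in>J. \<Sum>b\<in>B. \<Sum>a\<in>A. f a b i j)"
  by (simp only: sum.swap[where A = B and B = I] sum.swap[where A = B and B = J] sum.swap[where A = A and B = I]
      sum.swap[where A = A and B = J] sum.swap[where A = A and B = B])

lemma ptrace_op_expand:
  assumes P: "P = (\<lambda>a b. \<Sum>i<N. complex_of_real (c i) * proj (\<phi> i) a b)"
    and R: "\<rho> = (\<lambda>a b. \<Sum>j<M. complex_of_real (p j) * proj (\<psi> j) a b)"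
  shows "ptrace_op d DS AS DS' AS' P \<rho> = (\<lambda>r r'. \<Sum>i<N. \<Sum>j<M.
     complex_of_real (c i * p j) * proj (partial_inner d DS AS DS' AS' (\<phi> i) (\<psi> j)) r r')"
proof (intro ext)
  fix r r'
  let ?B = "basis d DS' AS'" and ?B' = "basis d (DS - DS') (AS - AS')"
  show "ptrace_op d DS AS DS' AS' P \<rho> r r' = (\<Sum>i<N. \<Sum>j<M.
     complex_of_real (c i * p j) * proj (partial_inner d DS AS DS' AS' (\<phi> i) (\<psi> j)) r r')"
  proof (cases "r \<in> ?B' \<and> r' \<in> ?B'")
    case False
    then show ?thesis unfolding ptrace_op_def proj_def partial_inner_def by auto
  next
    case True
    let ?T = "\<lambda>a b i j. complex_of_real (c i * p j) * ((cnj (\<phi> i b) * \<psi> j (join DS' AS' b r)) *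
                 (\<phi> i a * cnj (\<psi> j (join DS' AS' a r'))))"
    have "ptrace_op d DS AS DS' AS' P \<rho> r r' = (\<Sum>a\<in>?B. \<Sum>b\<in>?B. \<Sum>i<N. \<Sum>j<M. ?T a b i j)"
      unfolding ptrace_op_def using True by (simp add: P R proj_def sum_product algebra_simps)
    also have "\<dots> = (\<Sum>i<N. \<Sum>j<M. \<Sum>b\<in>?B. \<Sum>a\<in>?B. ?T a b i j)"
      by (rule sum_swap4)
    also have "\<dots> = (\<Sum>i<N. \<Sum>j<M.
        complex_of_real (c i * p j) * proj (partial_inner d DS AS DS' AS' (\<phi> i) (\<psi> j)) r r')"
      using True unfolding proj_def partial_inner_def
      by (simp add: cnj_sum sum_distrib_left sum_distrib_right mult_ac)
    finally show ?thesis .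
  qed
qed

lemma nonneg_comb_pure_ptrace_op:
  assumes "nonneg_comb_pure d DS' AS' P" "nonneg_comb_pure d DS AS \<rho>"
    and "finite DS" "finite AS" "DS' \<subseteq> DS" "AS' \<subseteq> AS" "0 < d"
  shows "nonneg_comb_pure d (DS - DS') (AS - AS') (ptrace_op d DS AS DS' AS' P \<rho>)"
proof -
  obtain N :: nat and c \<phi> where hP: "\<forall>i<N. 0 \<le> c i \<and> pure_state d DS' AS' (\<phi> i)"
    and P: "P = (\<lambda>a b. \<Sum>i<N. complex_of_real (c i) * proj (\<phi> i) a b)"
    using assms(1) unfolding nonneg_comb_pure_def by blast
  obtain M :: nat and p \<psi> where h\<rho>: "\<forall>j<M. 0 \<le> p j \<and> pure_state d DS AS (\<psi> j)"
    and R: "\<rho> = (\<lambda>a b. \<Sum>j<M. complex_of_real (p j) * proj (\<psi> j) a b)"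
    using assms(2) unfolding nonneg_comb_pure_def by blast
  have summand: "nonneg_comb_pure d (DS - DS') (AS - AS')
      (\<lambda>r r'. complex_of_real (c i * p j) * proj (partial_inner d DS AS DS' AS' (\<phi> i) (\<psi> j)) r r')"
    if "i \<in> {..<N}" "j \<in> {..<M}" for i j
  proof (rule nonneg_comb_pure_scale)
    show "nonneg_comb_pure d (DS - DS') (AS - AS') (proj (partial_inner d DS AS DS' AS' (\<phi> i) (\<psi> j)))"
      using hP h\<rho> that assms(3-7)
      by (intro nonneg_comb_pure_proj paired_support_partial_inner pure_state_paired_support)
        (auto simp: in_space_def partial_inner_def)
    show "0 \<le> c i * p j" using hP h\<rho> that by simp
  qed
  show ?thesis unfolding ptrace_op_expand[OF P R] by (intro nonneg_comb_pure_sum finite_lessThan summand)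
qed

lemma id_op_eq_sum_proj:
  assumes "finite DS" "finite AS"
  shows "id_op d DS AS = (\<lambda>a b. \<Sum>c\<in>basis d DS AS. proj (\<lambda>x. if x = c then 1 else 0) a b)"
proof (intro ext)
  fix a b :: cfg
  have "proj (\<lambda>x. if x = c then 1 else 0) a b = (if a = b then (if c = a then 1 else 0) else 0)" for c
    unfolding proj_def by auto
  then show "id_op d DS AS a b = (\<Sum>c\<in>basis d DS AS. proj (\<lambda>x. if x = c then 1 else 0) a b)"
    using finite_basis[OF assms] by (cases "a = b") (simp_all add: id_op_def)
qed

lemma nonneg_comb_pure_id_op:
  assumes "finite DS" "finite AS" "0 < d"
  shows "nonneg_comb_pure d DS AS (id_op d DS AS)"
  unfolding id_op_eq_sum_proj[OF assms(1,2)]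
proof (rule nonneg_comb_pure_sum[OF finite_basis[OF assms(1,2)]])
  fix c assume c: "c \<in> basis d DS AS"
  have "paired_support d DS AS (\<lambda>x. if x = c then 1 else 0)"
    unfolding paired_support_def pairing_def pairing_constraints_def
    by (intro exI[of _ "{}"] exI[of _ id] exI[of _ "\<lambda>_. 0"] exI[of _ "val c"]) simp
  moreover have "in_space d DS AS (\<lambda>x. if x = c then 1 else 0)" using c unfolding in_space_def by simp
  ultimately show "nonneg_comb_pure d DS AS (proj (\<lambda>x. if x = c then 1 else 0))"
    using nonneg_comb_pure_proj assms by blast
qed

definition split_cfg :: "nat set \<Rightarrow> nat set \<Rightarrow> nat set \<Rightarrow> nat set \<Rightarrow> cfg \<Rightarrow> cfg \<times> cfg" where
  "split_cfg DS AS DS' AS' c = ((restrict (fst c) (DS - DS'), restrict (snd c) (AS - AS')),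
     (restrict (fst c) DS', restrict (snd c) AS'))"

lemma split_cfg_join:
  assumes "r \<in> basis d (DS - DS') (AS - AS')" "a \<in> basis d DS' AS'"
  shows "split_cfg DS AS DS' AS' (join DS' AS' a r) = (r, a)"
proof -
  obtain f g f' g' where r: "r = (f, g)" and a: "a = (f', g')" by (cases r, cases a)
  have "f \<in> extensional (DS - DS')" "g \<in> extensional (AS - AS')" "f' \<in> extensional DS'" "g' \<in> extensional AS'"
    using assms unfolding r a basis_def by (simp_all add: PiE_iff)
  then show ?thesis unfolding r a split_cfg_def join_def
    by (simp add: fun_eq_iff restrict_def extensional_def)
qed

lemma join_split_cfg:
  assumes "c \<in> basis d DS AS" "DS' \<subseteq> DS" "AS' \<subseteq> AS"
  shows "(\<lambda>(r, a). join DS' AS' a r) (split_cfg DS AS DS' AS' c) = c"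
proof -
  obtain f g where c: "c = (f, g)" by (cases c)
  have "f \<in> extensional DS" "g \<in> extensional AS" using assms(1) unfolding c basis_def by (simp_all add: PiE_iff)
  then show ?thesis using assms(2,3) unfolding c split_cfg_def join_def
    by (auto simp: fun_eq_iff restrict_def extensional_def)
qed

lemma split_cfg_in_basis:
  assumes "c \<in> basis d DS AS" "DS' \<subseteq> DS" "AS' \<subseteq> AS"
  shows "split_cfg DS AS DS' AS' c \<in> basis d (DS - DS') (AS - AS') \<times> basis d DS' AS'"
proof -
  have "fst c \<in> Pi DS (\<lambda>_. {..<d})" "snd c \<in> Pi AS (\<lambda>_. {..<d})"
    using assms(1) unfolding basis_def by (auto simp: PiE_iff)
  then show ?thesis using assms(2,3) unfolding split_cfg_def basis_def by (simp add: Pi_iff) blast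
qed

lemma join_bij_betw:
  assumes "DS' \<subseteq> DS" "AS' \<subseteq> AS"
  shows "bij_betw (\<lambda>(r, a). join DS' AS' a r)
    (basis d (DS - DS') (AS - AS') \<times> basis d DS' AS') (basis d DS AS)"
proof (rule bij_betw_byWitness[where f' = "split_cfg DS AS DS' AS'"])
  show "\<forall>x\<in>basis d (DS - DS') (AS - AS') \<times> basis d DS' AS'.
      split_cfg DS AS DS' AS' ((\<lambda>(r, a). join DS' AS' a r) x) = x"
  proof
    fix x assume "x \<in> basis d (DS - DS') (AS - AS') \<times> basis d DS' AS'"
    then obtain r a where "x = (r, a)" "r \<in> basis d (DS - DS') (AS - AS')" "a \<in> basis d DS' AS'"
      by blast
    then show "split_cfg DS AS DS' AS' ((\<lambda>(r, a). join DS' AS' a r) x) = x"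
      using split_cfg_join by simp
  qed
  show "\<forall>c\<in>basis d DS AS. (\<lambda>(r, a). join DS' AS' a r) (split_cfg DS AS DS' AS' c) = c"
    using join_split_cfg assms by blast
  show "(\<lambda>(r, a). join DS' AS' a r) ` (basis d (DS - DS') (AS - AS') \<times> basis d DS' AS') \<subseteq> basis d DS AS"
  proof
    fix c assume "c \<in> (\<lambda>(r, a). join DS' AS' a r) ` (basis d (DS - DS') (AS - AS') \<times> basis d DS' AS')"
    then obtain ra where ra: "ra \<in> basis d (DS - DS') (AS - AS') \<times> basis d DS' AS'"
      "c = (\<lambda>(r, a). join DS' AS' a r) ra" by (rule imageE)
    obtain r a where "ra = (r, a)" by (cases ra)
    then show "c \<in> basis d DS AS" using ra join_in_basis[OF _ _ assms] by simp
  qed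
  show "split_cfg DS AS DS' AS' ` basis d DS AS \<subseteq> basis d (DS - DS') (AS - AS') \<times> basis d DS' AS'"
    using split_cfg_in_basis assms by blast
qed

lemma trace_ptrace_op_id:
  assumes "finite DS" "finite AS" "DS' \<subseteq> DS" "AS' \<subseteq> AS"
  shows "(\<Sum>r\<in>basis d (DS - DS') (AS - AS'). ptrace_op d DS AS DS' AS' (id_op d DS' AS') \<rho> r r)
    = (\<Sum>c\<in>basis d DS AS. \<rho> c c)"
proof -
  let ?B = "basis d DS' AS'" and ?B' = "basis d (DS - DS') (AS - AS')"
  have fin: "finite ?B" using assms by (intro finite_basis) (auto intro: finite_subset)
  have "(\<Sum>b\<in>?B. id_op d DS' AS' a b * \<rho> (join DS' AS' b r) (join DS' AS' a r))
      = \<rho> (join DS' AS' a r) (join DS' AS' a r)" if "a \<in> ?B" for a r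
  proof -
    have "(\<Sum>b\<in>?B. id_op d DS' AS' a b * \<rho> (join DS' AS' b r) (join DS' AS' a r))
        = (\<Sum>b\<in>?B. if a = b then \<rho> (join DS' AS' b r) (join DS' AS' a r) else 0)"
      by (rule sum.cong) (auto simp: id_op_def that)
    then show ?thesis using that fin by (simp add: sum.delta')
  qed
  then have "ptrace_op d DS AS DS' AS' (id_op d DS' AS') \<rho> r r = (\<Sum>a\<in>?B. \<rho> (join DS' AS' a r) (join DS' AS' a r))"
    if "r \<in> ?B'" for r
    using that unfolding ptrace_op_def by simp
  then have "(\<Sum>r\<in>?B'. ptrace_op d DS AS DS' AS' (id_op d DS' AS') \<rho> r r)
      = (\<Sum>(r, a)\<in>?B' \<times> ?B. \<rho> (join DS' AS' a r) (join DS' AS' a r))"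
    by (simp add: sum.cartesian_product)
  also have "\<dots> = (\<Sum>c\<in>basis d DS AS. \<rho> c c)"
    using sum.reindex_bij_betw[OF join_bij_betw[OF assms(3,4)], of "\<lambda>c. \<rho> c c"]
    by (simp add: case_prod_beta')
  finally show ?thesis .
qed

theorem mainTheorem2:
  fixes d :: nat and DS AS DS' AS' :: "nat set" and \<rho> :: op
  assumes "d \<ge> 2"
    and "finite DS" and "finite AS"
    and "DS' \<subseteq> DS" and "AS' \<subseteq> AS"
    and "valid_state d DS AS \<rho>"
  shows "(\<forall>Ps P. valid_measurement d DS' AS' Ps \<and> P \<in> set Ps \<longrightarrow>
            ptrace_op d DS AS DS' AS' P \<rho> = (\<lambda>_ _. 0) \<or>
            (\<exists>c::real. c > 0 \<and> (\<exists>\<tau>. valid_state d (DS - DS') (AS - AS') \<tau> \<and>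
                 ptrace_op d DS AS DS' AS' P \<rho> = (\<lambda>a b. complex_of_real c * \<tau> a b))))
         \<and> valid_state d (DS - DS') (AS - AS') (ptrace_op d DS AS DS' AS' (id_op d DS' AS') \<rho>)"
proof -
  have d: "0 < d" using assms(1) by simp
  have fin': "finite DS'" "finite AS'" using assms(2-5) by (auto intro: finite_subset)
  have \<rho>: "nonneg_comb_pure d DS AS \<rho>" "(\<Sum>c\<in>basis d DS AS. \<rho> c c) = 1"
    using assms(6) unfolding valid_state_iff by auto
  have "nonneg_comb_pure d (DS - DS') (AS - AS') (ptrace_op d DS AS DS' AS' P \<rho>)"
    if "valid_measurement d DS' AS' Ps" "P \<in> set Ps" for Ps P
    using that assms(2-5) \<rho>(1) d unfolding valid_measurement_def
    by (blast intro: nonneg_comb_pure_ptrace_op)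
  then have "\<forall>Ps P. valid_measurement d DS' AS' Ps \<and> P \<in> set Ps \<longrightarrow>
      ptrace_op d DS AS DS' AS' P \<rho> = (\<lambda>_ _. 0) \<or>
      (\<exists>c::real. c > 0 \<and> (\<exists>\<tau>. valid_state d (DS - DS') (AS - AS') \<tau> \<and>
        ptrace_op d DS AS DS' AS' P \<rho> = (\<lambda>a b. complex_of_real c * \<tau> a b)))"
    using nonneg_comb_pure_cases by blast
  moreover have "valid_state d (DS - DS') (AS - AS') (ptrace_op d DS AS DS' AS' (id_op d DS' AS') \<rho>)"
    unfolding valid_state_iff trace_ptrace_op_id[OF assms(2-5)] \<rho>(2)
    using nonneg_comb_pure_ptrace_op[OF nonneg_comb_pure_id_op[OF fin' d] \<rho>(1) assms(2-5) d] by simp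
  ultimately show ?thesis by blast
qed

end
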